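(* Let $3\le a<b$ be integers and regard $T(z,\alpha)=\frac{-\ln(1-z)}{\alpha a z^{a-1}+(1-\alpha)bz^{b-1}}$ as a function of $(z,\alpha)\in(0,1)\times\mathbb{R}$ (where the denominator is nonzero). Then $T$ has exactly one critical point, namely $$(\tilde z,\tilde\alpha)=\Big((a/b)^{1/(b-a)},\ \frac{b-1}{b-a}-\frac{1}{f(\tilde z)(b-a)}\Big),$$ and this point is a saddle point (the Hessian of $T$ there has negative determinant).
   Context: $f(z)=\frac{-\ln(1-z)(1-z)}{z}$ for $z\in(0,1)$. *)

theory Defs
  imports "HOL-Analysis.Analysis"
begin

definition f :: "real \<Rightarrow> real" where
  "f z = (- ln (1 - z) * (1 - z)) / z"

definition Tden :: "nat \<Rightarrow> nat \<Rightarrow> real \<Rightarrow> real \<Rightarrow> real" where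
  "Tden a b z \<alpha> = \<alpha> * real a * z ^ (a - 1) + (1 - \<alpha>) * real b * z ^ (b - 1)"

definition T :: "nat \<Rightarrow> nat \<Rightarrow> real \<Rightarrow> real \<Rightarrow> real" where
  "T a b z \<alpha> = - ln (1 - z) / Tden a b z \<alpha>"

definition Tdom :: "nat \<Rightarrow> nat \<Rightarrow> (real \<times> real) set" where
  "Tdom a b = {(z, \<alpha>). 0 < z \<and> z < 1 \<and> Tden a b z \<alpha> \<noteq> 0}"

definition critical_point :: "nat \<Rightarrow> nat \<Rightarrow> real \<times> real \<Rightarrow> bool" where
  "critical_point a b p \<longleftrightarrow> p \<in> Tdom a b \<and>
     ((\<lambda>(z, \<alpha>). T a b z \<alpha>) has_derivative (\<lambda>_. 0)) (at p)"

definition Tz :: "nat \<Rightarrow> nat \<Rightarrow> real \<Rightarrow> real \<Rightarrow> real" where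
  "Tz a b z \<alpha> = deriv (\<lambda>w. T a b w \<alpha>) z"

definition Ta :: "nat \<Rightarrow> nat \<Rightarrow> real \<Rightarrow> real \<Rightarrow> real" where
  "Ta a b z \<alpha> = deriv (\<lambda>w. T a b z w) \<alpha>"

definition hessian_det :: "nat \<Rightarrow> nat \<Rightarrow> real \<Rightarrow> real \<Rightarrow> real" where
  "hessian_det a b z \<alpha> =
     deriv (\<lambda>w. Tz a b w \<alpha>) z * deriv (\<lambda>w. Ta a b z w) \<alpha>
     - deriv (\<lambda>w. Tz a b z w) \<alpha> * deriv (\<lambda>w. Ta a b w \<alpha>) z"

end

theory Submission
  imports Defs
begin

(* Write D(z,alpha) = alpha a z^(a-1) + (1 - alpha) b z^(b-1) for the denominator of T and
   A(z) = a z^(a-1) - b z^(b-1) = dD/dalpha.  Then D = b z^(b-1) + alpha A(z) and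

     dT/dalpha = ln(1 - z) A(z) / D^2,

   so on (0,1) the alpha-partial vanishes exactly where A vanishes, i.e. on the single
   "balance line" z = z~ = (a/b)^(1/(b-a)).  On that line D = a z~^(a-1) does not depend on
   alpha, dT/dalpha is identically 0, and dT/dz = K (alpha - alpha~) with a constant K > 0;
   hence the only critical point is (z~, alpha~).  Moreover d/dz (dT/dalpha) = K there, so the
   Hessian has the shape [[*, K], [K, 0]] and determinant -K^2 < 0. *)

definition Tden_alpha :: "nat \<Rightarrow> nat \<Rightarrow> real \<Rightarrow> real" where
  "Tden_alpha a b z = real a * z ^ (a - 1) - real b * z ^ (b - 1)"

definition Tden_alpha_z :: "nat \<Rightarrow> nat \<Rightarrow> real \<Rightarrow> real" where
  "Tden_alpha_z a b z = real a * (real (a - 1) * z ^ (a - 2)) - real b * (real (b - 1) * z ^ (b - 2))"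

definition Tden_z :: "nat \<Rightarrow> nat \<Rightarrow> real \<Rightarrow> real \<Rightarrow> real" where
  "Tden_z a b z \<alpha> = \<alpha> * real a * (real (a - 1) * z ^ (a - 2))
     + (1 - \<alpha>) * real b * (real (b - 1) * z ^ (b - 2))"

definition T_dz :: "nat \<Rightarrow> nat \<Rightarrow> real \<Rightarrow> real \<Rightarrow> real" where
  "T_dz a b z \<alpha> = (Tden a b z \<alpha> / (1 - z) + ln (1 - z) * Tden_z a b z \<alpha>) / (Tden a b z \<alpha>)\<^sup>2"

definition T_dalpha :: "nat \<Rightarrow> nat \<Rightarrow> real \<Rightarrow> real \<Rightarrow> real" where
  "T_dalpha a b z \<alpha> = ln (1 - z) * Tden_alpha a b z / (Tden a b z \<alpha>)\<^sup>2"

lemma Tden_split: "Tden a b z \<alpha> = real b * z ^ (b - 1) + \<alpha> * Tden_alpha a b z"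
  unfolding Tden_def Tden_alpha_def by (simp add: algebra_simps)

lemma Tden_has_deriv_z: "((\<lambda>w. Tden a b w \<alpha>) has_real_derivative Tden_z a b z \<alpha>) (at z)"
  unfolding Tden_def Tden_z_def
  by (rule derivative_eq_intros refl | simp add: numeral_2_eq_2)+

lemma Tden_alpha_has_deriv: "(Tden_alpha a b has_real_derivative Tden_alpha_z a b z) (at z)"
  unfolding Tden_alpha_def[abs_def] Tden_alpha_z_def
  by (rule derivative_eq_intros refl | simp add: numeral_2_eq_2)+

lemma T_has_deriv_z:
  assumes "z < 1" "Tden a b z \<alpha> \<noteq> 0"
  shows "((\<lambda>w. T a b w \<alpha>) has_real_derivative T_dz a b z \<alpha>) (at z)"
proof -
  have "((\<lambda>w. - ln (1 - w)) has_real_derivative 1 / (1 - z)) (at z)"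
    using assms(1) by (auto intro!: derivative_eq_intros)
  from DERIV_divide[OF this Tden_has_deriv_z assms(2)] show ?thesis
    unfolding T_def[abs_def] T_dz_def by (simp add: power2_eq_square)
qed

lemma T_has_deriv_alpha:
  assumes "Tden a b z \<alpha> \<noteq> 0"
  shows "((\<lambda>u. T a b z u) has_real_derivative T_dalpha a b z \<alpha>) (at \<alpha>)"
proof -
  have "((\<lambda>u. Tden a b z u) has_real_derivative Tden_alpha a b z) (at \<alpha>)"
    unfolding Tden_split by (auto intro!: derivative_eq_intros)
  from DERIV_divide[OF DERIV_const[of "- ln (1 - z)"] this assms] show ?thesis
    unfolding T_def[abs_def] T_dalpha_def by (simp add: power2_eq_square)
qed

lemma T_has_derivative:
  assumes "z < 1" "Tden a b z \<alpha> \<noteq> 0"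
  shows "((\<lambda>(z, \<alpha>). T a b z \<alpha>) has_derivative
           (\<lambda>(h, k). h * T_dz a b z \<alpha> + k * T_dalpha a b z \<alpha>)) (at (z, \<alpha>))"
proof -
  have N: "((\<lambda>p. - ln (1 - fst p)) has_derivative (\<lambda>h. fst h * (1 / (1 - z)))) (at (z, \<alpha>))"
    using assms(1) by (auto intro!: derivative_eq_intros simp: fun_eq_iff field_simps)
  have D: "((\<lambda>p. Tden a b (fst p) (snd p)) has_derivative
             (\<lambda>h. fst h * Tden_z a b z \<alpha> + snd h * Tden_alpha a b z)) (at (z, \<alpha>))"
    unfolding Tden_def Tden_z_def Tden_alpha_def
    by (auto intro!: derivative_eq_intros simp: fun_eq_iff algebra_simps numeral_2_eq_2)
  have "((\<lambda>p. T a b (fst p) (snd p)) has_derivative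
          (\<lambda>(h, k). h * T_dz a b z \<alpha> + k * T_dalpha a b z \<alpha>)) (at (z, \<alpha>))"
    unfolding T_def
    by (rule has_derivative_eq_rhs[OF has_derivative_divide'[OF N D]])
       (use assms(2) in \<open>auto simp: fun_eq_iff T_dz_def T_dalpha_def field_simps power2_eq_square\<close>)
  then show ?thesis by (simp add: case_prod_beta')
qed

lemma critical_point_iff:
  "critical_point a b (z, \<alpha>) \<longleftrightarrow>
     0 < z \<and> z < 1 \<and> Tden a b z \<alpha> \<noteq> 0 \<and> T_dz a b z \<alpha> = 0 \<and> T_dalpha a b z \<alpha> = 0"
proof
  assume crit: "critical_point a b (z, \<alpha>)"
  then have z0: "0 < z" and z1: "z < 1" and den: "Tden a b z \<alpha> \<noteq> 0"
    and flat: "((\<lambda>(z, \<alpha>). T a b z \<alpha>) has_derivative (\<lambda>_. 0)) (at (z, \<alpha>))"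
    by (auto simp: critical_point_def Tdom_def)
  have zero_lin: "(*) (0::real) = (\<lambda>_. 0)" by auto
  have "((\<lambda>w. (w, \<alpha>)) has_derivative (\<lambda>h. (h, 0))) (at z)"
    by (auto intro!: derivative_eq_intros)
  from has_derivative_compose[OF this flat]
  have "((\<lambda>w. T a b w \<alpha>) has_real_derivative 0) (at z)"
    by (simp add: has_field_derivative_def zero_lin)
  then have "T_dz a b z \<alpha> = 0" using DERIV_unique[OF T_has_deriv_z[OF z1 den]] by simp
  moreover have "((\<lambda>u. (z, u)) has_derivative (\<lambda>h. (0, h))) (at \<alpha>)"
    by (auto intro!: derivative_eq_intros)
  from has_derivative_compose[OF this flat]
  have "((\<lambda>u. T a b z u) has_real_derivative 0) (at \<alpha>)"
    by (simp add: has_field_derivative_def zero_lin)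
  then have "T_dalpha a b z \<alpha> = 0" using DERIV_unique[OF T_has_deriv_alpha[OF den]] by simp
  ultimately show "0 < z \<and> z < 1 \<and> Tden a b z \<alpha> \<noteq> 0 \<and> T_dz a b z \<alpha> = 0 \<and> T_dalpha a b z \<alpha> = 0"
    using z0 z1 den by blast
next
  assume "0 < z \<and> z < 1 \<and> Tden a b z \<alpha> \<noteq> 0 \<and> T_dz a b z \<alpha> = 0 \<and> T_dalpha a b z \<alpha> = 0"
  then show "critical_point a b (z, \<alpha>)"
    unfolding critical_point_def Tdom_def
    by (auto intro: has_derivative_eq_rhs[OF T_has_derivative] simp: fun_eq_iff)
qed

lemma T_dalpha_eq_0_iff:
  assumes "0 < z" "z < 1" "Tden a b z \<alpha> \<noteq> 0"
  shows "T_dalpha a b z \<alpha> = 0 \<longleftrightarrow> Tden_alpha a b z = 0"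
  using assms by (simp add: T_dalpha_def)

section \<open>The balance line\<close>

lemma pow_eq_iff_powr_inverse:
  fixes z x :: real
  assumes "0 < z" "0 < x" "0 < n"
  shows "z ^ n = x \<longleftrightarrow> z = x powr (1 / real n)"
proof -
  have "z ^ n = z powr real n" using assms(1) by (simp add: powr_realpow)
  moreover have "(z powr real n) powr (1 / real n) = z" and "(x powr (1 / real n)) powr real n = x"
    using assms by (simp_all add: powr_powr)
  ultimately show ?thesis by metis
qed

lemma Tden_alpha_eq_0_iff:
  assumes "0 < a" "a < b" "0 < z"
  shows "Tden_alpha a b z = 0 \<longleftrightarrow> z = (real a / real b) powr (1 / (real b - real a))"
proof -
  have "z ^ (b - 1) = z ^ (a - 1) * z ^ (b - a)"
    using assms(1,2) by (simp add: power_add[symmetric])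
  then have "Tden_alpha a b z = 0 \<longleftrightarrow> z ^ (b - a) = real a / real b"
    using assms by (auto simp: Tden_alpha_def field_simps)
  also have "\<dots> \<longleftrightarrow> z = (real a / real b) powr (1 / real (b - a))"
    using assms by (intro pow_eq_iff_powr_inverse) auto
  finally show ?thesis using assms(2) by (simp add: of_nat_diff)
qed

lemma balance_point:
  assumes "0 < a" "a < b"
  defines "zt \<equiv> (real a / real b) powr (1 / (real b - real a))"
  shows "0 < zt" and "zt < 1" and "Tden_alpha a b zt = 0"
proof -
  have ab: "0 < real a / real b" "real a / real b < 1" using assms by auto
  then show zt0: "0 < zt" using assms by (simp add: zt_def)
  have "zt < 1 powr (1 / (real b - real a))"
    unfolding zt_def using ab assms(2) by (intro powr_less_mono2) auto
  then show "zt < 1" by simp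
  show "Tden_alpha a b zt = 0"
    using Tden_alpha_eq_0_iff[OF assms(1,2) zt0] by (simp add: zt_def)
qed

section \<open>Evaluation on the balance line\<close>

text \<open>The critical value of alpha on the balance line, and the common value K of the mixed
  second partial derivatives there.\<close>
definition balance_alpha :: "nat \<Rightarrow> nat \<Rightarrow> real \<Rightarrow> real" where
  "balance_alpha a b z = (real b - 1) / (real b - real a) - 1 / (f z * (real b - real a))"

definition saddle_slope :: "nat \<Rightarrow> nat \<Rightarrow> real \<Rightarrow> real" where
  "saddle_slope a b z = - ln (1 - z) * (real b - real a) / (z * (real a * z ^ (a - 1)))"

lemma saddle_slope_pos:
  assumes "0 < a" "a < b" "0 < z" "z < 1"
  shows "saddle_slope a b z > 0"
proof -
  have "ln (1 - z) < 0" using assms(3,4) by simp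
  then show ?thesis
    using assms by (simp add: saddle_slope_def divide_neg_pos mult_neg_pos)
qed

lemma Tden_at_balance:
  assumes "Tden_alpha a b z = 0"
  shows "Tden a b z \<alpha> = real a * z ^ (a - 1)"
  using assms unfolding Tden_split by (simp add: Tden_alpha_def)

lemma balance_pow_identities:
  assumes "2 \<le> a" "a < b" "0 < z" "Tden_alpha a b z = 0"
  shows "real a * z ^ (a - 2) = real a * z ^ (a - 1) / z"
    and "real b * z ^ (b - 2) = real a * z ^ (a - 1) / z"
proof -
  have "z ^ (a - 1) = z * z ^ (a - 2)" "z ^ (b - 1) = z * z ^ (b - 2)"
    using assms(1,2) by (simp_all add: power_Suc[symmetric] Suc_diff_Suc numeral_2_eq_2)
  then show "real a * z ^ (a - 2) = real a * z ^ (a - 1) / z"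
    and "real b * z ^ (b - 2) = real a * z ^ (a - 1) / z"
    using assms(3,4) by (auto simp: Tden_alpha_def field_simps)
qed

lemma T_dz_at_balance:
  assumes "2 \<le> a" "a < b" "0 < z" "z < 1" "Tden_alpha a b z = 0"
  shows "T_dz a b z \<alpha> = saddle_slope a b z * (\<alpha> - balance_alpha a b z)"
proof -
  define c where "c = real a * z ^ (a - 1)"
  have c0: "c > 0" using assms by (simp add: c_def)
  have "Tden_z a b z \<alpha> = \<alpha> * real (a - 1) * (real a * z ^ (a - 2))
          + (1 - \<alpha>) * real (b - 1) * (real b * z ^ (b - 2))"
    by (simp add: Tden_z_def algebra_simps)
  also have "\<dots> = c / z * ((real b - 1) - \<alpha> * (real b - real a))"
    unfolding balance_pow_identities[OF assms(1,2,3,5)] c_def[symmetric]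
    using assms(1,2) by (simp add: of_nat_diff algebra_simps)
  finally have dz: "Tden_z a b z \<alpha> = c / z * ((real b - 1) - \<alpha> * (real b - real a))" .
  define L d where "L = - ln (1 - z)" and "d = real b - real a"
  have L0: "L > 0" and d0: "d > 0" using assms(2,3,4) by (simp_all add: L_def d_def)
  have ln: "ln (1 - z) = - L" and fz: "f z = L * (1 - z) / z" by (simp_all add: L_def f_def)
  show ?thesis
    unfolding T_dz_def Tden_at_balance[OF assms(5)] c_def[symmetric] dz ln
      saddle_slope_def balance_alpha_def fz L_def[symmetric] d_def[symmetric]
    using assms(3,4) c0 L0 d0 by (simp add: field_simps power2_eq_square)
qed

lemma T_dalpha_has_deriv_z_at_balance:
  assumes "2 \<le> a" "a < b" "0 < z" "z < 1" "Tden_alpha a b z = 0"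
  shows "((\<lambda>w. T_dalpha a b w \<alpha>) has_real_derivative saddle_slope a b z) (at z)"
proof -
  define c where "c = real a * z ^ (a - 1)"
  have c0: "c > 0" using assms by (simp add: c_def)
  have slope: "Tden_alpha_z a b z = - (c / z) * (real b - real a)"
  proof -
    have "Tden_alpha_z a b z = real (a - 1) * (real a * z ^ (a - 2))
            - real (b - 1) * (real b * z ^ (b - 2))"
      by (simp add: Tden_alpha_z_def algebra_simps)
    then show ?thesis
      unfolding balance_pow_identities[OF assms(1,2,3,5)] c_def[symmetric]
      using assms(1,2) by (simp add: of_nat_diff algebra_simps)
  qed
  have den: "Tden a b z \<alpha> = c" using Tden_at_balance[OF assms(5)] by (simp add: c_def)
  have "((\<lambda>w. ln (1 - w)) has_real_derivative - 1 / (1 - z)) (at z)"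
    using assms(4) by (auto intro!: derivative_eq_intros)
  from DERIV_divide[OF DERIV_mult[OF this Tden_alpha_has_deriv[of a b z]]
                       DERIV_mult[OF Tden_has_deriv_z[of a b \<alpha> z] Tden_has_deriv_z[of a b \<alpha> z]]]
  have "((\<lambda>w. T_dalpha a b w \<alpha>) has_real_derivative
          (Tden_alpha_z a b z * ln (1 - z) * (c * c)) / ((c * c) * (c * c))) (at z)"
    using c0 by (simp add: T_dalpha_def power2_eq_square den assms(5))
  also have "(Tden_alpha_z a b z * ln (1 - z) * (c * c)) / ((c * c) * (c * c))
               = saddle_slope a b z"
    unfolding slope saddle_slope_def c_def[symmetric] using c0 assms(3) by (simp add: field_simps)
  finally show ?thesis .
qed

lemma Tz_eq: "z < 1 \<Longrightarrow> Tden a b z \<alpha> \<noteq> 0 \<Longrightarrow> Tz a b z \<alpha> = T_dz a b z \<alpha>"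
  unfolding Tz_def by (rule DERIV_imp_deriv[OF T_has_deriv_z])

lemma Ta_eq: "Tden a b z \<alpha> \<noteq> 0 \<Longrightarrow> Ta a b z \<alpha> = T_dalpha a b z \<alpha>"
  unfolding Ta_def by (rule DERIV_imp_deriv[OF T_has_deriv_alpha])

lemma Ta_eventually_eq:
  assumes "Tden a b z \<alpha> \<noteq> 0"
  shows "eventually (\<lambda>w. Ta a b w \<alpha> = T_dalpha a b w \<alpha>) (nhds z)"
proof -
  have "open {w. Tden a b w \<alpha> \<noteq> 0}"
    unfolding Tden_def by (rule open_Collect_neq) (auto intro!: continuous_intros)
  from eventually_nhds_in_open[OF this] assms
  have "eventually (\<lambda>w. Tden a b w \<alpha> \<noteq> 0) (nhds z)" by simp
  then show ?thesis by eventually_elim (rule Ta_eq)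
qed

text \<open>At any point of the balance line the Hessian is [[*, K], [K, 0]], so its determinant is -K^2.\<close>
lemma hessian_det_at_balance:
  assumes "2 \<le> a" "a < b" "0 < z" "z < 1" "Tden_alpha a b z = 0"
  shows "hessian_det a b z \<alpha> = - (saddle_slope a b z)\<^sup>2"
proof -
  have den: "Tden a b z w \<noteq> 0" for w
    using assms by (simp add: Tden_at_balance)
  have "Ta a b z w = 0" for w
    using Ta_eq[OF den] assms(5) by (simp add: T_dalpha_def)
  then have h_aa: "deriv (\<lambda>w. Ta a b z w) \<alpha> = 0" by simp
  have "Tz a b z w = saddle_slope a b z * (w - balance_alpha a b z)" for w
    using Tz_eq[OF assms(4) den] T_dz_at_balance[OF assms] by simp
  then have h_za: "deriv (\<lambda>w. Tz a b z w) \<alpha> = saddle_slope a b z"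
    by (auto intro!: DERIV_imp_deriv derivative_eq_intros)
  have "((\<lambda>w. Ta a b w \<alpha>) has_real_derivative saddle_slope a b z) (at z)"
    using DERIV_cong_ev[OF refl Ta_eventually_eq[OF den] refl]
      T_dalpha_has_deriv_z_at_balance[OF assms] by simp
  then have h_az: "deriv (\<lambda>w. Ta a b w \<alpha>) z = saddle_slope a b z"
    by (rule DERIV_imp_deriv)
  show ?thesis unfolding hessian_det_def h_aa h_za h_az by (simp add: power2_eq_square)
qed

lemma critical_point_iff_balance:
  assumes "2 \<le> a" "a < b"
  defines "zt \<equiv> (real a / real b) powr (1 / (real b - real a))"
  shows "critical_point a b (z, \<alpha>) \<longleftrightarrow> z = zt \<and> \<alpha> = balance_alpha a b zt"
proof -
  have a0: "0 < a" using assms(1) by simp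
  note balance_point[OF a0 assms(2), folded zt_def]
  note zt0 = this(1) and zt1 = this(2) and bal = this(3)
  have den: "Tden a b zt \<alpha> \<noteq> 0"
    using a0 zt0 by (simp add: Tden_at_balance[OF bal])
  have slope: "saddle_slope a b zt > 0"
    using saddle_slope_pos[OF a0 assms(2) zt0 zt1] .
  show ?thesis
  proof
    assume "critical_point a b (z, \<alpha>)"
    then have z0: "0 < z" and "z < 1" "Tden a b z \<alpha> \<noteq> 0" "T_dz a b z \<alpha> = 0" "T_dalpha a b z \<alpha> = 0"
      by (auto simp: critical_point_iff)
    then have "z = zt"
      using T_dalpha_eq_0_iff Tden_alpha_eq_0_iff[OF a0 assms(2) z0] by (simp add: zt_def)
    then show "z = zt \<and> \<alpha> = balance_alpha a b zt"
      using \<open>T_dz a b z \<alpha> = 0\<close> T_dz_at_balance[OF assms(1,2) zt0 zt1 bal] slope by simp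
  next
    assume "z = zt \<and> \<alpha> = balance_alpha a b zt"
    then show "critical_point a b (z, \<alpha>)"
      using zt0 zt1 den bal T_dz_at_balance[OF assms(1,2) zt0 zt1 bal]
      by (simp add: critical_point_iff T_dalpha_def)
  qed
qed

theorem lemma7:
  fixes a b :: nat
  assumes "3 \<le> a" and "a < b"
  defines "zt \<equiv> (real a / real b) powr (1 / (real b - real a))"
  defines "\<alpha>t \<equiv> (real b - 1) / (real b - real a) - 1 / (f zt * (real b - real a))"
  shows "{p. critical_point a b p} = {(zt, \<alpha>t)} \<and> hessian_det a b zt \<alpha>t < 0"
proof
  have a2: "2 \<le> a" and a0: "0 < a" using assms(1) by simp_all
  have \<alpha>t: "\<alpha>t = balance_alpha a b zt" by (simp add: \<alpha>t_def balance_alpha_def)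
  show "{p. critical_point a b p} = {(zt, \<alpha>t)}"
    using critical_point_iff_balance[OF a2 assms(2)] by (auto simp: zt_def \<alpha>t)
  note balance_point[OF a0 assms(2), folded zt_def]
  note zt0 = this(1) and zt1 = this(2) and bal = this(3)
  show "hessian_det a b zt \<alpha>t < 0"
    using hessian_det_at_balance[OF a2 assms(2) zt0 zt1 bal]
      saddle_slope_pos[OF a0 assms(2) zt0 zt1] by simp
qed

end
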